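(* A graph $G$ is $\gamma\gamma_{\rm cer}$-perfect if and only if $G$ is $P_4$-free.
   Context: All graphs are finite and simple. A graph is $P_4$-free if it has no induced subgraph isomorphic to the path $P_4$ on four vertices. A set $D\subseteq V_G$ is a dominating set of $G$ if every vertex of $V_G-D$ has a neighbor in $D$; $\gamma(G)$ is the minimum cardinality of a dominating set. A set $D\subseteq V_G$ is a certified dominating set of $G$ if $D$ is a dominating set of $G$ and every vertex of $D$ has either zero or at least two neighbors in $V_G-D$; $\gamma_{\rm cer}(G)$ is the minimum cardinality of a certified dominating set of $G$. A graph $G$ is $\gamma\gamma_{\rm cer}$-perfect if $\gamma(H)=\gamma_{\rm cer}(H)$ for every induced connected subgraph $H$ of $G$ with $H\neq K_2$. *)

theory Defs
  imports Main
begin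

definition simple_graph :: "'a set \<Rightarrow> ('a \<Rightarrow> 'a \<Rightarrow> bool) \<Rightarrow> bool" where
  "simple_graph V E \<longleftrightarrow> finite V \<and> (\<forall>x y. E x y \<longrightarrow> E y x) \<and> (\<forall>x. \<not> E x x)
     \<and> (\<forall>x y. E x y \<longrightarrow> x \<in> V \<and> y \<in> V)"

definition induced_edges :: "('a \<Rightarrow> 'a \<Rightarrow> bool) \<Rightarrow> 'a set \<Rightarrow> 'a \<Rightarrow> 'a \<Rightarrow> bool" where
  "induced_edges E S = (\<lambda>x y. E x y \<and> x \<in> S \<and> y \<in> S)"

definition connected_graph :: "'a set \<Rightarrow> ('a \<Rightarrow> 'a \<Rightarrow> bool) \<Rightarrow> bool" where
  "connected_graph V E \<longleftrightarrow> V \<noteq> {} \<and>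
     (\<forall>x\<in>V. \<forall>y\<in>V. (x, y) \<in> {(u, v). E u v}\<^sup>*)"

definition is_K2 :: "'a set \<Rightarrow> ('a \<Rightarrow> 'a \<Rightarrow> bool) \<Rightarrow> bool" where
  "is_K2 V E \<longleftrightarrow> card V = 2 \<and> (\<forall>x\<in>V. \<forall>y\<in>V. x \<noteq> y \<longrightarrow> E x y)"

definition dominating_set :: "'a set \<Rightarrow> ('a \<Rightarrow> 'a \<Rightarrow> bool) \<Rightarrow> 'a set \<Rightarrow> bool" where
  "dominating_set V E D \<longleftrightarrow> D \<subseteq> V \<and> (\<forall>v\<in>V - D. \<exists>u\<in>D. E v u)"

definition certified_dominating_set :: "'a set \<Rightarrow> ('a \<Rightarrow> 'a \<Rightarrow> bool) \<Rightarrow> 'a set \<Rightarrow> bool" where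
  "certified_dominating_set V E D \<longleftrightarrow> dominating_set V E D \<and>
     (\<forall>v\<in>D. card {u \<in> V - D. E v u} = 0 \<or> card {u \<in> V - D. E v u} \<ge> 2)"

definition domination_number :: "'a set \<Rightarrow> ('a \<Rightarrow> 'a \<Rightarrow> bool) \<Rightarrow> nat" where
  "domination_number V E = Min (card ` {D. dominating_set V E D})"

definition certified_domination_number :: "'a set \<Rightarrow> ('a \<Rightarrow> 'a \<Rightarrow> bool) \<Rightarrow> nat" where
  "certified_domination_number V E = Min (card ` {D. certified_dominating_set V E D})"

definition gamma_gamma_cer_perfect :: "'a set \<Rightarrow> ('a \<Rightarrow> 'a \<Rightarrow> bool) \<Rightarrow> bool" where
  "gamma_gamma_cer_perfect V E \<longleftrightarrow>
     (\<forall>S \<subseteq> V. connected_graph S (induced_edges E S) \<and> \<not> is_K2 S (induced_edges E S) \<longrightarrow>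
        domination_number S (induced_edges E S) = certified_domination_number S (induced_edges E S))"

definition P4_free :: "'a set \<Rightarrow> ('a \<Rightarrow> 'a \<Rightarrow> bool) \<Rightarrow> bool" where
  "P4_free V E \<longleftrightarrow> \<not> (\<exists>a\<in>V. \<exists>b\<in>V. \<exists>c\<in>V. \<exists>d\<in>V. distinct [a, b, c, d] \<and>
     E a b \<and> E b c \<and> E c d \<and> \<not> E a c \<and> \<not> E a d \<and> \<not> E b d)"

end

theory Submission
  imports Defs
begin

text \<open>
  If G contains an induced path a-b-c-d, this path is a connected induced subgraph with
  \<gamma> = 2 (take {b, c}), but a certified dominating set of it must contain all four vertices:
  a vertex of D with exactly one neighbour outside D is forbidden, and propagating this along
  the path forces everything into D.

  Conversely, by Seinsche's theorem every P4-free graph on at least two vertices is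
  disconnected or has a disconnected complement. So a connected induced subgraph H on at least
  three vertices is a join of two nonempty parts. Either H has a universal vertex u, and {u} is
  certified dominating, or both parts have at least two vertices and a suitable pair of vertices
  (one in each part, or a whole part of size two) is certified dominating, while \<gamma>(H) \<ge> 2.
\<close>

section \<open>Splittings and complements\<close>

definition splits :: "('a \<Rightarrow> 'a \<Rightarrow> bool) \<Rightarrow> 'a set \<Rightarrow> bool" where
  "splits R S \<longleftrightarrow> (\<exists>A B. A \<union> B = S \<and> A \<inter> B = {} \<and> A \<noteq> {} \<and> B \<noteq> {} \<and>
     (\<forall>a\<in>A. \<forall>b\<in>B. \<not> R a b))"

definition complement_graph :: "('a \<Rightarrow> 'a \<Rightarrow> bool) \<Rightarrow> 'a \<Rightarrow> 'a \<Rightarrow> bool" where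
  "complement_graph R = (\<lambda>x y. x \<noteq> y \<and> \<not> R x y)"

lemma splitsI:
  "A \<union> B = S \<Longrightarrow> A \<inter> B = {} \<Longrightarrow> A \<noteq> {} \<Longrightarrow> B \<noteq> {} \<Longrightarrow>
    (\<And>a b. a \<in> A \<Longrightarrow> b \<in> B \<Longrightarrow> \<not> R a b) \<Longrightarrow> splits R S"
  unfolding splits_def by blast

lemma complement_graph_complement_graph:
  "\<forall>x. \<not> R x x \<Longrightarrow> complement_graph (complement_graph R) = R"
  unfolding complement_graph_def by fastforce

lemma P4_free_subset: "P4_free S R \<Longrightarrow> T \<subseteq> S \<Longrightarrow> P4_free T R"
  unfolding P4_free_def by blast

text \<open>The path a-b-c-d has complement c-a-d-b, again a P4.\<close>
lemma P4_free_complement_graph: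
  assumes sym: "\<forall>x y. R x y \<longrightarrow> R y x" and "P4_free S R"
  shows "P4_free S (complement_graph R)"
  unfolding P4_free_def
proof
  assume "\<exists>a\<in>S. \<exists>b\<in>S. \<exists>c\<in>S. \<exists>d\<in>S. distinct [a, b, c, d] \<and>
    complement_graph R a b \<and> complement_graph R b c \<and> complement_graph R c d \<and>
    \<not> complement_graph R a c \<and> \<not> complement_graph R a d \<and> \<not> complement_graph R b d"
  then obtain a b c d where "a \<in> S" "b \<in> S" "c \<in> S" "d \<in> S" and "distinct [a, b, c, d]"
    "complement_graph R a b" "complement_graph R b c" "complement_graph R c d"
    "\<not> complement_graph R a c" "\<not> complement_graph R a d" "\<not> complement_graph R b d"
    by blast
  moreover from this have "distinct [c, a, d, b] \<and> R c a \<and> R a d \<and> R d b \<and> \<not> R c d \<and> \<not> R c b \<and> \<not> R a b"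
    using sym unfolding complement_graph_def by auto
  ultimately show False using \<open>P4_free S R\<close> unfolding P4_free_def by blast
qed

lemma splits_insert_if_nonneighbour:
  assumes sym: "\<forall>x y. R x y \<longrightarrow> R y x" and irr: "\<forall>x. \<not> R x x"
    and p4: "P4_free (insert v (A \<union> B)) R" and v: "v \<notin> A \<union> B"
    and AB: "A \<inter> B = {}" "B \<noteq> {}" "\<forall>a\<in>A. \<forall>b\<in>B. \<not> R a b"
    and x: "x \<in> A" "\<not> R v x"
  shows "splits R (insert v (A \<union> B))"
proof (cases "\<exists>z\<in>B. R v z")
  case False
  show ?thesis
    by (rule splitsI[of "insert v A" B]) (use False AB v sym in auto)
next
  case True
  then obtain z where z: "z \<in> B" "R v z" by blast
  have no_edge: "\<not> R y x'" if "y \<in> A" "x' \<in> A" "R v y" "\<not> R v x'" for y x'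
  proof
    assume "R y x'"
    with that z v AB sym irr
    have "distinct [x', y, v, z] \<and> R x' y \<and> R y v \<and> R v z \<and> \<not> R x' v \<and> \<not> R x' z \<and> \<not> R y z"
      by auto
    moreover have "x' \<in> insert v (A \<union> B)" "y \<in> insert v (A \<union> B)" "z \<in> insert v (A \<union> B)"
      using that z by auto
    ultimately show False using p4 unfolding P4_free_def by blast
  qed
  show ?thesis
  proof (rule splitsI[of "{u \<in> A. \<not> R v u}" "insert v ({u \<in> A. R v u} \<union> B)"])
    fix a b assume "a \<in> {u \<in> A. \<not> R v u}" "b \<in> insert v ({u \<in> A. R v u} \<union> B)"
    then show "\<not> R a b" using no_edge AB(3) sym by blast
  qed (use v AB x in auto)
qed

lemma splits_insert:
  assumes sym: "\<forall>x y. R x y \<longrightarrow> R y x" and irr: "\<forall>x. \<not> R x x"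
    and p4: "P4_free (insert v F) R" and v: "v \<notin> F" and "splits R F"
  shows "splits R (insert v F) \<or> splits (complement_graph R) (insert v F)"
proof (cases "\<forall>u\<in>F. R v u")
  case True
  have "F \<noteq> {}" using \<open>splits R F\<close> unfolding splits_def by blast
  then have "splits (complement_graph R) (insert v F)"
    by (intro splitsI[of "{v}" F]) (use True v sym in \<open>auto simp: complement_graph_def\<close>)
  then show ?thesis ..
next
  case False
  then obtain x where x: "x \<in> F" "\<not> R v x" by blast
  obtain A B where AB: "A \<union> B = F" "A \<inter> B = {}" "A \<noteq> {}" "B \<noteq> {}" "\<forall>a\<in>A. \<forall>b\<in>B. \<not> R a b"
    using \<open>splits R F\<close> unfolding splits_def by blast
  have "splits R (insert v F)"
  proof (cases "x \<in> A")
    case True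
    have "P4_free (insert v (A \<union> B)) R" "v \<notin> A \<union> B" using p4 v AB(1) by simp_all
    from splits_insert_if_nonneighbour[OF sym irr this AB(2,4,5) True x(2)]
    show ?thesis using AB(1) by simp
  next
    case False
    then have "x \<in> B" using x AB(1) by blast
    have "P4_free (insert v (B \<union> A)) R" "v \<notin> B \<union> A" "B \<inter> A = {}"
      using p4 v AB(1,2) by (auto simp: Un_commute)
    moreover have "\<forall>b\<in>B. \<forall>a\<in>A. \<not> R b a" using AB(5) sym by blast
    ultimately have "splits R (insert v (B \<union> A))"
      using splits_insert_if_nonneighbour[OF sym irr _ _ _ AB(3) _ \<open>x \<in> B\<close> x(2)] by blast
    then
    show ?thesis using AB(1) by (simp add: Un_commute)
  qed
  then show ?thesis ..
qed

theorem P4_free_splits_or_complement_splits: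
  assumes "finite S" "\<forall>x y. R x y \<longrightarrow> R y x" "\<forall>x. \<not> R x x" "P4_free S R" "2 \<le> card S"
  shows "splits R S \<or> splits (complement_graph R) S"
  using assms
proof (induction S rule: finite_induct)
  case empty
  then show ?case by simp
next
  case (insert v F)
  note sym = insert.prems(1) and irr = insert.prems(2) and p4 = insert.prems(3)
  show ?case
  proof (cases "2 \<le> card F")
    case True
    have "splits R F \<or> splits (complement_graph R) F"
      using insert.IH[OF sym irr P4_free_subset[OF p4 subset_insertI] True] .
    then show ?thesis
    proof
      assume "splits R F"
      then show ?thesis using splits_insert[OF sym irr p4 insert.hyps(2)] by blast
    next
      assume "splits (complement_graph R) F"
      moreover have "\<forall>x y. complement_graph R x y \<longrightarrow> complement_graph R y x"
        "\<forall>x. \<not> complement_graph R x x"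
        using sym unfolding complement_graph_def by auto
      ultimately have "splits (complement_graph R) (insert v F) \<or>
          splits (complement_graph (complement_graph R)) (insert v F)"
        using splits_insert[OF _ _ P4_free_complement_graph[OF sym p4] insert.hyps(2)] by blast
      then show ?thesis using complement_graph_complement_graph[of R, OF irr] by auto
    qed
  next
    case False
    then have "card F = 1" using insert.hyps insert.prems(4) by simp
    then obtain u where "F = {u}" by (auto simp: card_1_singleton_iff)
    then have F: "F = {u}" "u \<noteq> v" using insert.hyps(2) by auto
    show ?thesis
    proof (cases "R v u")
      case True
      have "splits (complement_graph R) (insert v F)"
        by (rule splitsI[of "{v}" "{u}"]) (use True F sym in \<open>auto simp: complement_graph_def\<close>)
      then show ?thesis ..
    next
      case False
      have "splits R (insert v F)"
        by (rule splitsI[of "{v}" "{u}"]) (use False F sym in auto)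
      then show ?thesis ..
    qed
  qed
qed

lemma connected_graph_not_splits:
  assumes "connected_graph S R" and within: "\<forall>x y. R x y \<longrightarrow> x \<in> S \<and> y \<in> S"
  shows "\<not> splits R S"
proof
  assume "splits R S"
  then obtain A B where AB: "A \<union> B = S" "A \<inter> B = {}" "A \<noteq> {}" "B \<noteq> {}" "\<forall>a\<in>A. \<forall>b\<in>B. \<not> R a b"
    unfolding splits_def by blast
  obtain a b where ab: "a \<in> A" "b \<in> B" using AB by blast
  have "(a, b) \<in> {(u, v). R u v}\<^sup>*"
    using assms(1) ab AB(1) unfolding connected_graph_def by blast
  moreover have "z \<in> A" if "R y z" "y \<in> A" for y z
    using that AB within by blast
  ultimately have "b \<in> A"
    using ab(1) by (induction rule: rtrancl_induct) auto
  then show False using ab AB(2) by blast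
qed

lemma is_K2_if_connected_card_2:
  assumes "connected_graph S R" "\<forall>x y. R x y \<longrightarrow> x \<in> S \<and> y \<in> S" "\<forall>x y. R x y \<longrightarrow> R y x"
    and "card S = 2"
  shows "is_K2 S R"
proof -
  obtain x y where xy: "S = {x, y}" "x \<noteq> y" using \<open>card S = 2\<close> by (meson card_2_iff)
  have "R x y"
  proof (rule ccontr)
    assume "\<not> R x y"
    then have "splits R S" by (intro splitsI[of "{x}" "{y}"]) (use xy assms(3) in auto)
    then show False using connected_graph_not_splits assms(1,2) by blast
  qed
  then show ?thesis unfolding is_K2_def using assms(3,4) xy by auto
qed

lemma connected_graph_if_reachable_from:
  assumes sym: "\<forall>x y. R x y \<longrightarrow> R y x" and "w \<in> S"
    and reach: "\<forall>x\<in>S. (w, x) \<in> {(u, v). R u v}\<^sup>*"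
  shows "connected_graph S R"
  unfolding connected_graph_def
proof (intro conjI ballI)
  fix x y assume "x \<in> S" "y \<in> S"
  have "{(u, v). R u v}\<inverse> = {(u, v). R u v}" using sym by auto
  moreover have "(x, w) \<in> ({(u, v). R u v}\<inverse>)\<^sup>*"
    using reach \<open>x \<in> S\<close> by (blast intro: rtrancl_converseI)
  ultimately have "(x, w) \<in> {(u, v). R u v}\<^sup>*" by simp
  then show "(x, y) \<in> {(u, v). R u v}\<^sup>*" using reach \<open>y \<in> S\<close> by (meson rtrancl_trans)
qed (use \<open>w \<in> S\<close> in blast)

section \<open>Domination numbers\<close>

lemma dominating_set_self: "dominating_set V E V"
  unfolding dominating_set_def by auto

lemma dominating_setD: "dominating_set V E D \<Longrightarrow> v \<in> V - D \<Longrightarrow> \<exists>u\<in>D. E v u"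
  unfolding dominating_set_def by blast

lemma certified_dominating_set_self: "certified_dominating_set V E V"
  unfolding certified_dominating_set_def using dominating_set_self by auto

lemma finite_dominating_sets: "finite V \<Longrightarrow> finite {D. dominating_set V E D}"
  by (rule finite_subset[of _ "Pow V"]) (auto simp: dominating_set_def)

lemma finite_certified_dominating_sets: "finite V \<Longrightarrow> finite {D. certified_dominating_set V E D}"
  by (rule finite_subset[of _ "Pow V"])
    (auto simp: dominating_set_def certified_dominating_set_def)

lemma domination_number_le_card:
  "finite V \<Longrightarrow> dominating_set V E D \<Longrightarrow> domination_number V E \<le> card D"
  unfolding domination_number_def using finite_dominating_sets by (intro Min_le) auto

lemma certified_domination_number_le_card:
  "finite V \<Longrightarrow> certified_dominating_set V E D \<Longrightarrow> certified_domination_number V E \<le> card D"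
  unfolding certified_domination_number_def using finite_certified_dominating_sets
  by (intro Min_le) auto

lemma domination_number_attained:
  assumes "finite V"
  obtains D where "dominating_set V E D" "domination_number V E = card D"
proof -
  have "Min (card ` {D. dominating_set V E D}) \<in> card ` {D. dominating_set V E D}"
    using finite_dominating_sets[OF assms] dominating_set_self by (intro Min_in) auto
  then show ?thesis using that unfolding domination_number_def by auto
qed

lemma certified_domination_number_attained:
  assumes "finite V"
  obtains D where "certified_dominating_set V E D" "certified_domination_number V E = card D"
proof -
  have "Min (card ` {D. certified_dominating_set V E D}) \<in> card ` {D. certified_dominating_set V E D}"
    using finite_certified_dominating_sets[OF assms] certified_dominating_set_self
    by (intro Min_in) auto
  then show ?thesis using that unfolding certified_domination_number_def by auto
qed

lemma domination_number_le_certified_domination_number: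
  "finite V \<Longrightarrow> domination_number V E \<le> certified_domination_number V E"
  by (metis certified_domination_number_attained certified_dominating_set_def
      domination_number_le_card)

lemma domination_number_ge_1:
  assumes "finite V" "V \<noteq> {}"
  shows "1 \<le> domination_number V E"
proof -
  obtain D where D: "dominating_set V E D" "domination_number V E = card D"
    using domination_number_attained[OF assms(1)] .
  then have "D \<noteq> {}" "finite D"
    using assms finite_subset unfolding dominating_set_def by auto
  then show ?thesis using D(2) by (simp add: Suc_le_eq card_gt_0_iff)
qed

lemma domination_number_ge_2_if_no_universal_vertex:
  assumes "finite V" "V \<noteq> {}" and sym: "\<forall>x y. E x y \<longrightarrow> E y x"
    and no_universal: "\<not> (\<exists>u\<in>V. \<forall>w\<in>V - {u}. E u w)"
  shows "2 \<le> domination_number V E"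
proof -
  obtain D where D: "dominating_set V E D" "domination_number V E = card D"
    using domination_number_attained[OF assms(1)] .
  have "D \<noteq> {u}" for u
  proof
    assume "D = {u}"
    then have "u \<in> V" "\<forall>w\<in>V - {u}. E w u" using D(1) unfolding dominating_set_def by auto
    then show False using no_universal sym by blast
  qed
  moreover have "D \<noteq> {}" "finite D"
    using D(1) assms(1,2) finite_subset unfolding dominating_set_def by auto
  ultimately have "card D \<noteq> 0" "card D \<noteq> 1" by (auto simp: card_1_singleton_iff)
  then show ?thesis using D(2) by linarith
qed

lemma certified_dominating_set_other_neighbour:
  assumes "finite V" "certified_dominating_set V E D" "v \<in> D" "u \<in> V - D" "E v u"
  obtains w where "w \<in> V - D" "w \<noteq> u" "E v w"
proof -
  let ?N = "{w \<in> V - D. E v w}"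
  have "finite ?N" "u \<in> ?N" using assms(1,4,5) by auto
  moreover have "card ?N = 0 \<or> 2 \<le> card ?N"
    using assms(2,3) unfolding certified_dominating_set_def by blast
  ultimately have "\<not> card ?N \<le> Suc 0" by auto
  then obtain w1 w2 where "w1 \<in> ?N" "w2 \<in> ?N" "w1 \<noteq> w2"
    using card_le_Suc0_iff_eq[OF \<open>finite ?N\<close>] by blast
  then show ?thesis using that by (cases "w1 = u") auto
qed

lemma certified_dominating_setI:
  assumes "finite V" "dominating_set V E D"
    and two: "\<And>v. v \<in> D \<Longrightarrow> \<exists>u\<in>V - D. \<exists>w\<in>V - D. u \<noteq> w \<and> E v u \<and> E v w"
  shows "certified_dominating_set V E D"
  unfolding certified_dominating_set_def
proof (intro conjI assms(2) ballI disjI2)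
  fix v assume "v \<in> D"
  then obtain u w where "u \<in> V - D" "w \<in> V - D" "u \<noteq> w" "E v u" "E v w" using two by blast
  then have "card {u, w} \<le> card {x \<in> V - D. E v x}" using assms(1) by (intro card_mono) auto
  then show "2 \<le> card {x \<in> V - D. E v x}" using \<open>u \<noteq> w\<close> by simp
qed

lemma certified_domination_number_le_1_if_universal_vertex:
  assumes "finite V" "3 \<le> card V" "u \<in> V" "\<forall>w\<in>V - {u}. E u w" "\<forall>x y. E x y \<longrightarrow> E y x"
  shows "certified_domination_number V E \<le> 1"
proof -
  have "dominating_set V E {u}" using assms(3-5) unfolding dominating_set_def by blast
  moreover have "2 \<le> card (V - {u})" using assms(1-3) by simp
  then obtain w1 w2 where "w1 \<in> V - {u}" "w2 \<in> V - {u}" "w1 \<noteq> w2"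
    using card_le_Suc0_iff_eq[of "V - {u}"] assms(1) by auto
  ultimately have "certified_dominating_set V E {u}"
    using assms(1,4) by (intro certified_dominating_setI) auto
  then show ?thesis using certified_domination_number_le_card[OF assms(1)] by fastforce
qed

lemma certified_dominating_set_join_part:
  assumes "finite V" "A \<union> B = V" "A \<inter> B = {}" "A \<noteq> {}" "2 \<le> card B"
    and join: "\<forall>a\<in>A. \<forall>b\<in>B. E a b \<and> E b a"
  shows "certified_dominating_set V E A"
proof (rule certified_dominating_setI)
  show "dominating_set V E A" using assms(2-4) join unfolding dominating_set_def by blast
  obtain b1 b2 where "b1 \<in> B" "b2 \<in> B" "b1 \<noteq> b2"
    using card_le_Suc0_iff_eq[of B] assms(1,2,5) by auto
  then show "\<exists>u\<in>V - A. \<exists>w\<in>V - A. u \<noteq> w \<and> E v u \<and> E v w" if "v \<in> A" for v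
    using that assms(2,3) join by blast
qed fact

lemma certified_domination_number_join_le_2:
  assumes fin: "finite V" and AB: "A \<union> B = V" "A \<inter> B = {}" "2 \<le> card A" "2 \<le> card B"
    and join: "\<forall>a\<in>A. \<forall>b\<in>B. E a b \<and> E b a"
  shows "certified_domination_number V E \<le> 2"
proof -
  have fin_AB: "finite A" "finite B" using fin AB(1) by auto
  have ne: "A \<noteq> {}" "B \<noteq> {}" using AB(3,4) by auto
  \<comment> \<open>A cross pair {a, b} can fail when a part has two vertices (in C4, a keeps only one
      neighbour outside {a, b}); then that part itself is taken.\<close>
  consider "card A = 2" | "card B = 2" | "3 \<le> card A" "3 \<le> card B" using AB(3,4) by linarith
  then show ?thesis
  proof cases
    case 1
    have "certified_dominating_set V E A"
      using certified_dominating_set_join_part[OF fin AB(1,2) ne(1) AB(4) join] .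
    then show ?thesis using certified_domination_number_le_card[OF fin] 1 by fastforce
  next
    case 2
    have "certified_dominating_set V E B"
      using certified_dominating_set_join_part[of V B A E] fin AB ne join by auto
    then show ?thesis using certified_domination_number_le_card[OF fin] 2 by fastforce
  next
    case 3
    obtain a b where ab: "a \<in> A" "b \<in> B" using AB(3,4) by fastforce
    have two_others: "\<exists>x\<in>X - {x0}. \<exists>y\<in>X - {x0}. x \<noteq> y" if "finite X" "3 \<le> card X" for X x0
    proof -
      have "\<not> card (X - {x0}) \<le> Suc 0" using that by (auto simp: card_Diff_singleton_if)
      then show ?thesis using card_le_Suc0_iff_eq[of "X - {x0}"] that(1) by auto
    qed
    have "certified_dominating_set V E {a, b}"
    proof (rule certified_dominating_setI[OF fin])
      show "dominating_set V E {a, b}" using AB(1) ab join unfolding dominating_set_def by blast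
      fix v assume "v \<in> {a, b}"
      then show "\<exists>u\<in>V - {a, b}. \<exists>w\<in>V - {a, b}. u \<noteq> w \<and> E v u \<and> E v w"
        using two_others[OF fin_AB(1) 3(1), of a] two_others[OF fin_AB(2) 3(2), of b]
          ab AB(1,2) join by blast
    qed
    moreover have "card {a, b} \<le> 2" by (cases "a = b") auto
    ultimately show ?thesis using certified_domination_number_le_card[OF fin] le_trans by blast
  qed
qed

section \<open>An induced P4 is not perfect\<close>

lemma certified_dominating_set_P4_contains_end:
  assumes cert: "certified_dominating_set {a, b, c, d} R D"
    and nbr_a: "\<And>u. R a u \<longleftrightarrow> u = b" and nbr_b: "\<And>u. R b u \<longleftrightarrow> u = a \<or> u = c"
    and nbr_d: "\<And>u. R d u \<longleftrightarrow> u = c"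
  shows "a \<in> D \<and> b \<in> D"
proof -
  let ?S = "{a, b, c, d}"
  have fin: "finite ?S" by simp
  have dom: "dominating_set ?S R D" using cert unfolding certified_dominating_set_def ..
  have a: "a \<in> D"
  proof (rule ccontr)
    assume "a \<notin> D"
    then have "b \<in> D" using dominating_setD[OF dom, of a] nbr_a by auto
    obtain w where "w \<in> ?S - D" "w \<noteq> a" "R b w"
      using certified_dominating_set_other_neighbour[OF fin cert \<open>b \<in> D\<close>, of a] \<open>a \<notin> D\<close> nbr_b
      by auto
    then have "c \<notin> D" using nbr_b by auto
    then have "d \<in> D" using dominating_setD[OF dom, of d] nbr_d by auto
    obtain w' where "w' \<in> ?S - D" "w' \<noteq> c" "R d w'"
      using certified_dominating_set_other_neighbour[OF fin cert \<open>d \<in> D\<close>, of c] \<open>c \<notin> D\<close> nbr_d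
      by auto
    then show False using nbr_d by auto
  qed
  moreover have "b \<in> D"
  proof (rule ccontr)
    assume "b \<notin> D"
    obtain w where "w \<in> ?S - D" "w \<noteq> b" "R a w"
      using certified_dominating_set_other_neighbour[OF fin cert a, of b] \<open>b \<notin> D\<close> nbr_a by auto
    then show False using nbr_a by auto
  qed
  ultimately show ?thesis ..
qed

lemma certified_dominating_set_P4_eq:
  assumes cert: "certified_dominating_set {a, b, c, d} R D"
    and nbr: "\<And>u. R a u \<longleftrightarrow> u = b" "\<And>u. R b u \<longleftrightarrow> u = a \<or> u = c"
      "\<And>u. R c u \<longleftrightarrow> u = d \<or> u = b" "\<And>u. R d u \<longleftrightarrow> u = c"
  shows "D = {a, b, c, d}"
proof -
  have "{d, c, b, a} = {a, b, c, d}" by auto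
  then have "a \<in> D \<and> b \<in> D" "d \<in> D \<and> c \<in> D"
    using certified_dominating_set_P4_contains_end[OF cert nbr(1,2,4)]
      certified_dominating_set_P4_contains_end[of d c b a R D, OF _ nbr(4,3,1)] cert
    by simp_all
  moreover have "D \<subseteq> {a, b, c, d}"
    using cert unfolding certified_dominating_set_def dominating_set_def by blast
  ultimately show ?thesis by blast
qed

lemma P4_free_if_gamma_gamma_cer_perfect:
  assumes "simple_graph V E" "gamma_gamma_cer_perfect V E"
  shows "P4_free V E"
proof (rule ccontr)
  assume "\<not> P4_free V E"
  then obtain a b c d where abcd: "a \<in> V" "b \<in> V" "c \<in> V" "d \<in> V" and path: "distinct [a, b, c, d]"
     "E a b" "E b c" "E c d" "\<not> E a c" "\<not> E a d" "\<not> E b d"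
    unfolding P4_free_def by blast
  have sym: "\<forall>x y. E x y \<longrightarrow> E y x" and irr: "\<forall>x. \<not> E x x"
    using assms(1) unfolding simple_graph_def by auto
  define S where "S = {a, b, c, d}"
  define R where "R = induced_edges E S"
  have nbr: "R a u \<longleftrightarrow> u = b" "R b u \<longleftrightarrow> u = a \<or> u = c"
    "R c u \<longleftrightarrow> u = d \<or> u = b" "R d u \<longleftrightarrow> u = c" for u
    unfolding R_def induced_edges_def S_def using path sym irr by auto
  have card_S: "card S = 4" unfolding S_def using path(1) by simp
  have "connected_graph S R"
  proof (rule connected_graph_if_reachable_from)
    let ?E = "{(u, v). R u v}"
    have "(b, a) \<in> ?E\<^sup>*" "(b, c) \<in> ?E\<^sup>*" using nbr by auto
    moreover from this(2) have "(b, d) \<in> ?E\<^sup>*" by (rule rtrancl_into_rtrancl) (simp add: nbr)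
    ultimately show "\<forall>x\<in>S. (b, x) \<in> ?E\<^sup>*" unfolding S_def by auto
  qed (use sym in \<open>auto simp: S_def R_def induced_edges_def\<close>)
  moreover have "\<not> is_K2 S R" using card_S unfolding is_K2_def by simp
  moreover have "S \<subseteq> V" unfolding S_def using abcd by simp
  ultimately have gamma_eq: "domination_number S R = certified_domination_number S R"
    using assms(2) unfolding gamma_gamma_cer_perfect_def R_def by blast
  obtain D where D: "certified_dominating_set S R D" "certified_domination_number S R = card D"
    using certified_domination_number_attained[of S R] unfolding S_def by blast
  have "D = S" using certified_dominating_set_P4_eq[OF D(1)[unfolded S_def] nbr] S_def by simp
  then have "certified_domination_number S R = 4" using D(2) card_S by simp
  moreover have "dominating_set S R {b, c}" unfolding dominating_set_def S_def using nbr by auto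
  then have "domination_number S R \<le> 2"
    using domination_number_le_card[of S R "{b, c}"] path(1) unfolding S_def by simp
  ultimately show False using gamma_eq by simp
qed

section \<open>P4-free graphs are perfect\<close>

lemma certified_domination_number_le_domination_number_of_join:
  assumes fin: "finite S" and card_S: "3 \<le> card S" and sym: "\<forall>x y. R x y \<longrightarrow> R y x"
    and AB: "A \<union> B = S" "A \<inter> B = {}" "A \<noteq> {}" "B \<noteq> {}"
    and join: "\<forall>a\<in>A. \<forall>b\<in>B. R a b \<and> R b a"
  shows "certified_domination_number S R \<le> domination_number S R"
proof (cases "\<exists>u\<in>S. \<forall>w\<in>S - {u}. R u w")
  case True
  then obtain u where "u \<in> S" "\<forall>w\<in>S - {u}. R u w" by blast
  then have "certified_domination_number S R \<le> 1"
    by (rule certified_domination_number_le_1_if_universal_vertex[OF fin card_S _ _ sym])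
  moreover have "1 \<le> domination_number S R" using domination_number_ge_1[OF fin] AB(1,3) by blast
  ultimately show ?thesis by linarith
next
  case no_universal: False
  have part_ge_2: "2 \<le> card X"
    if "X \<union> Y = S" "X \<inter> Y = {}" "X \<noteq> {}" "\<forall>x\<in>X. \<forall>y\<in>Y. R x y" for X Y
  proof -
    have "finite X" using fin that(1) by auto
    then have "card X \<noteq> 0" using that(3) by simp
    moreover have "card X \<noteq> 1"
    proof
      assume "card X = 1"
      then obtain x where "X = {x}" by (auto simp: card_1_singleton_iff)
      then show False using no_universal that(1,4) by blast
    qed
    ultimately show ?thesis by linarith
  qed
  have "2 \<le> card A" using part_ge_2[OF AB(1,2,3)] join by blast
  moreover have "2 \<le> card B"
    using part_ge_2[of B A] AB join by (simp add: Un_commute Int_commute)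
  ultimately have "certified_domination_number S R \<le> 2"
    using certified_domination_number_join_le_2[OF fin AB(1,2) _ _ join] by blast
  moreover have "2 \<le> domination_number S R"
    using domination_number_ge_2_if_no_universal_vertex[OF fin _ sym no_universal] AB(1,3) by blast
  ultimately show ?thesis by linarith
qed

lemma certified_domination_number_le_domination_number_if_P4_free:
  assumes fin: "finite S" and sym: "\<forall>x y. R x y \<longrightarrow> R y x" and irr: "\<forall>x. \<not> R x x"
    and within: "\<forall>x y. R x y \<longrightarrow> x \<in> S \<and> y \<in> S"
    and conn: "connected_graph S R" and not_K2: "\<not> is_K2 S R" and p4: "P4_free S R"
  shows "certified_domination_number S R \<le> domination_number S R"
proof -
  have "S \<noteq> {}" using conn unfolding connected_graph_def by blast
  show ?thesis
  proof (cases "card S = 1")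
    case True
    then show ?thesis
      using certified_domination_number_le_card[OF fin certified_dominating_set_self[of S R]]
        domination_number_ge_1[OF fin \<open>S \<noteq> {}\<close>, of R]
      by linarith
  next
    case False
    have "card S \<noteq> 2" using is_K2_if_connected_card_2[OF conn within sym] not_K2 by blast
    moreover have "card S \<noteq> 0" using \<open>S \<noteq> {}\<close> fin by simp
    ultimately have card_S: "3 \<le> card S" using False by linarith
    have "splits (complement_graph R) S"
      using P4_free_splits_or_complement_splits[OF fin sym irr p4] card_S
        connected_graph_not_splits[OF conn within] by simp
    then obtain A B where AB: "A \<union> B = S" "A \<inter> B = {}" "A \<noteq> {}" "B \<noteq> {}"
      and "\<forall>a\<in>A. \<forall>b\<in>B. \<not> complement_graph R a b"
      unfolding splits_def by blast
    then have join: "\<forall>a\<in>A. \<forall>b\<in>B. R a b \<and> R b a"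
      using sym unfolding complement_graph_def by (metis disjoint_iff)
    show ?thesis
      using certified_domination_number_le_domination_number_of_join[OF fin card_S sym AB join] .
  qed
qed

lemma P4_free_induced_edges:
  assumes "P4_free V E" "S \<subseteq> V"
  shows "P4_free S (induced_edges E S)"
  unfolding P4_free_def
proof
  assume "\<exists>a\<in>S. \<exists>b\<in>S. \<exists>c\<in>S. \<exists>d\<in>S. distinct [a, b, c, d] \<and>
    induced_edges E S a b \<and> induced_edges E S b c \<and> induced_edges E S c d \<and>
    \<not> induced_edges E S a c \<and> \<not> induced_edges E S a d \<and> \<not> induced_edges E S b d"
  then obtain a b c d where "a \<in> V" "b \<in> V" "c \<in> V" "d \<in> V" "distinct [a, b, c, d]"
    "E a b" "E b c" "E c d" "\<not> E a c" "\<not> E a d" "\<not> E b d"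
    using assms(2) unfolding induced_edges_def by blast
  then show False using assms(1) unfolding P4_free_def by blast
qed

lemma gamma_gamma_cer_perfect_if_P4_free:
  assumes "simple_graph V E" "P4_free V E"
  shows "gamma_gamma_cer_perfect V E"
  unfolding gamma_gamma_cer_perfect_def
proof (intro allI impI)
  fix S assume S: "S \<subseteq> V" and H: "connected_graph S (induced_edges E S) \<and> \<not> is_K2 S (induced_edges E S)"
  have fin: "finite S" using assms(1) S finite_subset unfolding simple_graph_def by blast
  have "\<forall>x y. induced_edges E S x y \<longrightarrow> induced_edges E S y x"
    "\<forall>x. \<not> induced_edges E S x x" "\<forall>x y. induced_edges E S x y \<longrightarrow> x \<in> S \<and> y \<in> S"
    using assms(1) unfolding simple_graph_def induced_edges_def by auto
  with H have "certified_domination_number S (induced_edges E S) \<le> domination_number S (induced_edges E S)"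
    using certified_domination_number_le_domination_number_if_P4_free[OF fin]
      P4_free_induced_edges[OF assms(2) S] by blast
  with domination_number_le_certified_domination_number[OF fin]
  show "domination_number S (induced_edges E S) = certified_domination_number S (induced_edges E S)"
    by (rule antisym)
qed

theorem corollary2p8:
  fixes V :: "'a set" and E :: "'a \<Rightarrow> 'a \<Rightarrow> bool"
  assumes "simple_graph V E"
  shows "gamma_gamma_cer_perfect V E \<longleftrightarrow> P4_free V E"
  using P4_free_if_gamma_gamma_cer_perfect[OF assms] gamma_gamma_cer_perfect_if_P4_free[OF assms]
  by blast

end
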